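(* Let $B$ be a Banach $A$-bimodule and let $(e_\alpha)_\alpha\subseteq A$ be a bounded net which is an approximate identity both for $A$ (i.e. $e_\alpha a\to a$ and $ae_\alpha\to a$ for all $a\in A$) and for $B$ (i.e. $e_\alpha b\to b$ and $be_\alpha\to b$ for all $b\in B$), with $e_\alpha\to e''$ weak$^*$ in $A^{**}$. If $Z^t_{e''}(B^{**})=B^{**}$, $B^*A=B^*$ and $AB^*\neq B^*$, then $Z_{B^{**}}(A^{**})\neq Z^t_{B^{**}}(A^{**})$. Similarly, if $Z_{e''}(B^{**})=B^{**}$, $AB^*=B^*$ and $B^*A\neq B^*$, then $Z_{B^{**}}(A^{**})\neq Z^t_{B^{**}}(A^{**})$.
   Context: $A$ is a Banach algebra and $B$ a Banach $A$-bimodule with left action $\pi_\ell(a,b)=ab$ and right action $\pi_r(b,a)=ba$. For a bounded bilinear $m:X\times Y\to Z$ define $m^*:Z^*\times X\to Y^*$, $\langle m^*(z',x),y\rangle=\langle z',m(x,y)\rangle$; $m^{**}:Y^{**}\times Z^*\to X^*$, $\langle m^{**}(y'',z'),x\rangle=\langle y'',m^*(z',x)\rangle$; $m^{***}:X^{**}\times Y^{**}\to Z^{**}$, $\langle m^{***}(x'',y''),z'\rangle=\langle x'',m^{**}(y'',z')\rangle$. Let $m^t(y,x)=m(x,y)$ and $m^{t***t}(x'',y'')=(m^t)^{***}(y'',x'')$. Elements are identified with their canonical images in biduals. For $b'\in B^*$, $a\in A$ define $b'a,ab'\in B^*$ by $\langle b'a,b\rangle=\langle b',ab\rangle$ and $\langle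 ab',b\rangle=\langle b',ba\rangle$; $B^*A=\{b'a\}$, $AB^*=\{ab'\}$. Topological centers: $Z_{B^{**}}(A^{**})=\{a''\in A^{**}: b''\mapsto\pi_\ell^{***}(a'',b'')$ is weak$^*$-to-weak$^*$ continuous$\}$; $Z^t_{B^{**}}(A^{**})=\{a''\in A^{**}: b''\mapsto(\pi_r^t)^{***}(a'',b'')$ is weak$^*$-to-weak$^*$ continuous$\}$, where $\pi_r^t(a,b)=ba$. For $a''\in A^{**}$: $Z^t_{a''}(B^{**})=\{b''\in B^{**}:\pi_\ell^{t***t}(a'',b'')=\pi_\ell^{***}(a'',b'')\}$ and $Z_{a''}(B^{**})=\{b''\in B^{**}:\pi_r^{t***t}(b'',a'')=\pi_r^{***}(b'',a'')\}$. *)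

theory Defs
  imports "HOL-Analysis.Analysis"
begin

text \<open>Duals are real duals: X* = X \<Rightarrow>L real, X** = (X \<Rightarrow>L real) \<Rightarrow>L real.\<close>

definition adj1 :: "('x::real_normed_vector \<Rightarrow> 'y::real_normed_vector \<Rightarrow> 'z::real_normed_vector)
    \<Rightarrow> ('z \<Rightarrow>\<^sub>L real) \<Rightarrow> 'x \<Rightarrow> ('y \<Rightarrow>\<^sub>L real)" where
  "adj1 m z' x = Blinfun (\<lambda>y. blinfun_apply z' (m x y))"

definition adj2 :: "('x::real_normed_vector \<Rightarrow> 'y::real_normed_vector \<Rightarrow> 'z::real_normed_vector)
    \<Rightarrow> (('y \<Rightarrow>\<^sub>L real) \<Rightarrow>\<^sub>L real) \<Rightarrow> ('z \<Rightarrow>\<^sub>L real) \<Rightarrow> ('x \<Rightarrow>\<^sub>L real)" where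
  "adj2 m y'' z' = Blinfun (\<lambda>x. blinfun_apply y'' (adj1 m z' x))"

definition adj3 :: "('x::real_normed_vector \<Rightarrow> 'y::real_normed_vector \<Rightarrow> 'z::real_normed_vector)
    \<Rightarrow> (('x \<Rightarrow>\<^sub>L real) \<Rightarrow>\<^sub>L real) \<Rightarrow> (('y \<Rightarrow>\<^sub>L real) \<Rightarrow>\<^sub>L real) \<Rightarrow> (('z \<Rightarrow>\<^sub>L real) \<Rightarrow>\<^sub>L real)" where
  "adj3 m x'' y'' = Blinfun (\<lambda>z'. blinfun_apply x'' (adj2 m y'' z'))"

definition wstar :: "(('x::real_normed_vector \<Rightarrow>\<^sub>L real) \<Rightarrow>\<^sub>L real) topology" where
  "wstar = topology_generated_by
     {{x''. blinfun_apply x'' x' \<in> U} | x' U. open (U::real set)}"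

definition banach_bimodule ::
  "('a::{real_normed_algebra,banach} \<Rightarrow> 'b::banach \<Rightarrow> 'b) \<Rightarrow> ('b \<Rightarrow> 'a \<Rightarrow> 'b) \<Rightarrow> bool" where
  "banach_bimodule la ra \<longleftrightarrow>
     bounded_bilinear la \<and> bounded_bilinear ra \<and>
     (\<forall>a c b. la (a * c) b = la a (la c b)) \<and>
     (\<forall>b a c. ra b (a * c) = ra (ra b a) c) \<and>
     (\<forall>a b c. ra (la a b) c = la a (ra b c))"

definition Zcenter :: "('a::real_normed_vector \<Rightarrow> 'b::real_normed_vector \<Rightarrow> 'b)
    \<Rightarrow> (('a \<Rightarrow>\<^sub>L real) \<Rightarrow>\<^sub>L real) set" where
  "Zcenter la = {a''. continuous_map wstar wstar (\<lambda>b''. adj3 la a'' b'')}"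

definition Zcenter_t :: "('b::real_normed_vector \<Rightarrow> 'a::real_normed_vector \<Rightarrow> 'b)
    \<Rightarrow> (('a \<Rightarrow>\<^sub>L real) \<Rightarrow>\<^sub>L real) set" where
  "Zcenter_t ra = {a''. continuous_map wstar wstar (\<lambda>b''. adj3 (\<lambda>a b. ra b a) a'' b'')}"

definition Zt_elem :: "('a::real_normed_vector \<Rightarrow> 'b::real_normed_vector \<Rightarrow> 'b)
    \<Rightarrow> (('a \<Rightarrow>\<^sub>L real) \<Rightarrow>\<^sub>L real) \<Rightarrow> (('b \<Rightarrow>\<^sub>L real) \<Rightarrow>\<^sub>L real) set" where
  "Zt_elem la a'' = {b''. adj3 (\<lambda>b a. la a b) b'' a'' = adj3 la a'' b''}"

definition Z_elem :: "('b::real_normed_vector \<Rightarrow> 'a::real_normed_vector \<Rightarrow> 'b)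
    \<Rightarrow> (('a \<Rightarrow>\<^sub>L real) \<Rightarrow>\<^sub>L real) \<Rightarrow> (('b \<Rightarrow>\<^sub>L real) \<Rightarrow>\<^sub>L real) set" where
  "Z_elem ra a'' = {b''. adj3 (\<lambda>a b. ra b a) a'' b'' = adj3 ra b'' a''}"

text \<open>B*A = {b'a} with (b'a)(b) = b'(ab);  AB* = {ab'} with (ab')(b) = b'(ba).\<close>
definition dual_mod_right :: "('a \<Rightarrow> 'b::real_normed_vector \<Rightarrow> 'b) \<Rightarrow> ('b \<Rightarrow>\<^sub>L real) set" where
  "dual_mod_right la = {Blinfun (\<lambda>b. blinfun_apply b' (la a b)) | b' a. True}"

definition dual_mod_left :: "('b::real_normed_vector \<Rightarrow> 'a \<Rightarrow> 'b) \<Rightarrow> ('b \<Rightarrow>\<^sub>L real) set" where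
  "dual_mod_left ra = {Blinfun (\<lambda>b. blinfun_apply b' (ra b a)) | b' a. True}"

definition directed :: "'i::preorder itself \<Rightarrow> bool" where
  "directed _ \<longleftrightarrow> (\<forall>i j::'i. \<exists>k. i \<le> k \<and> j \<le> k)"

definition net_filter :: "('i::preorder) filter" where
  "net_filter = (INF k. principal {k..})"

end

theory Submission
  imports Defs
begin

(* Write z'\<cdot>a for the dual action adj1 m z' a of A on B* induced by an action m
   of A on B, so that B*A (resp. AB* ) is the set of products for the left (resp. right) action.
   For a bounded approximate identity (e_i) with weak* limit e'' we show:
   (1) if every z' \<in> B* factors as z' = c'\<cdot>a, then b'' \<mapsto> e''\<cdot>b'' is the identity of B**,
       hence weak*-continuous, i.e. e'' lies in the corresponding topological centre;
   (2) conversely, if b'' \<mapsto> e''\<cdot>b'' is weak*-continuous, every z' factors.  Indeed, a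
       weak*-continuous linear functional on B** is evaluation at a point of B*, which gives
       z'\<cdot>e_i \<rightarrow> z' weakly; the essential part {z'. z'\<cdot>e_i \<rightarrow> z'} is a closed subspace,
       hence weakly closed by Hahn--Banach, so it contains z'; and the Cohen--Hewitt
       factorization theorem factors every essential vector.
   If the two topological centres coincided, (1) for one action and (2) for the other would
   give AB* = B* (resp. B*A = B* ), contrary to the hypothesis. *)

section \<open>The Hahn--Banach theorem\<close>

text \<open>A partially defined linear functional is represented by its graph, a linear subspace of
  V \<times> \<real>; Zorn's lemma needs that unions of chains of subspaces are subspaces.\<close>
lemma subspace_Union_chain:
  fixes \<C> :: "'v::real_vector set set"
  assumes chain: "\<C> \<in> chains {G. subspace G}" and ne: "\<C> \<noteq> {}"
  shows "subspace (\<Union>\<C>)"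
proof -
  have sub: "subspace G" if "G \<in> \<C>" for G using chain that by (auto simp: chains_def)
  have common: "\<exists>G\<in>\<C>. x \<in> G \<and> y \<in> G" if xy: "x \<in> \<Union>\<C>" "y \<in> \<Union>\<C>" for x y
  proof -
    obtain G1 G2 where "G1 \<in> \<C>" "G2 \<in> \<C>" "x \<in> G1" "y \<in> G2" using xy by blast
    moreover have "G1 \<subseteq> G2 \<or> G2 \<subseteq> G1"
      using chain \<open>G1 \<in> \<C>\<close> \<open>G2 \<in> \<C>\<close> by (auto simp: chains_def chain_subset_def)
    ultimately show ?thesis by blast
  qed
  show ?thesis
    unfolding subspace_def
  proof (intro conjI ballI allI)
    obtain G where "G \<in> \<C>" using ne by blast
    then show "0 \<in> \<Union>\<C>" using sub[of G] subspace_0 by blast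
  next
    fix x y assume "x \<in> \<Union>\<C>" "y \<in> \<Union>\<C>"
    then obtain G where "G \<in> \<C>" "x \<in> G" "y \<in> G" using common by blast
    then show "x + y \<in> \<Union>\<C>" using sub[of G] subspace_add by blast
  next
    fix c :: real and x assume "x \<in> \<Union>\<C>"
    then obtain G where "G \<in> \<C>" "x \<in> G" by blast
    then show "c *\<^sub>R x \<in> \<Union>\<C>" using sub[of G] subspace_scale by blast
  qed
qed

text \<open>Sublinear functionals, and graphs of linear functionals lying below one.  For a graph G
  that is a subspace, domination forces G to be single-valued, since p 0 = 0.\<close>
definition sublinear :: "('v::real_vector \<Rightarrow> real) \<Rightarrow> bool" where
  "sublinear p \<longleftrightarrow> (\<forall>x y. p (x + y) \<le> p x + p y) \<and> (\<forall>t x. t > 0 \<longrightarrow> p (t *\<^sub>R x) = t * p x)"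

lemma sublinear_zero:
  assumes "sublinear p" shows "p 0 = 0"
proof -
  have homog: "\<And>t x. t > 0 \<Longrightarrow> p (t *\<^sub>R x) = t * p x" using assms unfolding sublinear_def by blast
  have "p 0 = 2 * p 0" using homog[of 2 0] by simp
  then show ?thesis by simp
qed

definition dominated_by :: "('v \<Rightarrow> real) \<Rightarrow> ('v \<times> real) set \<Rightarrow> bool" where
  "dominated_by p G \<longleftrightarrow> (\<forall>(x, a) \<in> G. a \<le> p x)"

text \<open>The one-dimensional extension step: a dominated graph can be extended to x0 by a value
  \<xi> squeezed between sup (a - p(y - x0)) and inf (p(u + x0) - b).\<close>
lemma dominated_extension_value:
  fixes p :: "'v::real_vector \<Rightarrow> real"
  assumes p: "sublinear p" and G: "subspace G" and dom: "dominated_by p G"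
  shows "\<exists>\<xi>. \<forall>(y, a) \<in> G. \<forall>t. a + t * \<xi> \<le> p (y + t *\<^sub>R x0)"
proof -
  have subadd: "p (x + y) \<le> p x + p y" for x y using p unfolding sublinear_def by blast
  have homog: "p (t *\<^sub>R x) = t * p x" if "t > 0" for t x using p that unfolding sublinear_def by blast
  have domG: "a \<le> p y" if "(y, a) \<in> G" for y a using dom that unfolding dominated_by_def by blast
  define L where "L = {a - p (y - x0) | y a. (y, a) \<in> G}"
  define \<xi> where "\<xi> = Sup L"
  have sep: "a - p (y - x0) \<le> p (u + x0) - b" if "(y, a) \<in> G" "(u, b) \<in> G" for y a u b
  proof -
    have "(y + u, a + b) \<in> G" using subspace_add[OF G that] by simp
    then have "a + b \<le> p ((y - x0) + (u + x0))" using domG by simp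
    also have "\<dots> \<le> p (y - x0) + p (u + x0)" by (rule subadd)
    finally show ?thesis by simp
  qed
  have zero: "(0, 0) \<in> G" using subspace_0[OF G] by (simp add: zero_prod_def)
  have lower: "a - p (y - x0) \<le> \<xi>" if "(y, a) \<in> G" for y a
    unfolding \<xi>_def
  proof (rule cSup_upper)
    show "a - p (y - x0) \<in> L" using that unfolding L_def by blast
    show "bdd_above L" unfolding L_def using sep[OF _ zero] by (auto intro!: bdd_aboveI)
  qed
  have upper: "\<xi> \<le> p (u + x0) - b" if "(u, b) \<in> G" for u b
    unfolding \<xi>_def
    by (rule cSup_least) (use zero sep[OF _ that] in \<open>auto simp: L_def\<close>)
  have "a + t * \<xi> \<le> p (y + t *\<^sub>R x0)" if ya: "(y, a) \<in> G" for y a t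
  proof (cases t "0::real" rule: linorder_cases)
    case less
    define s where "s = - t"
    have s: "s > 0" using less unfolding s_def by simp
    have "((1/s) *\<^sub>R y, (1/s) * a) \<in> G" using subspace_scale[OF G ya, of "1/s"] by simp
    then have "(1/s) * a - p ((1/s) *\<^sub>R y - x0) \<le> \<xi>" by (rule lower)
    then have "s * ((1/s) * a - p ((1/s) *\<^sub>R y - x0)) \<le> s * \<xi>" using s by (simp add: mult_left_mono)
    moreover have "s * p ((1/s) *\<^sub>R y - x0) = p (y + t *\<^sub>R x0)"
      using homog[OF s, of "(1/s) *\<^sub>R y - x0"] s by (simp add: s_def algebra_simps)
    ultimately show ?thesis using s by (simp add: s_def algebra_simps)
  next
    case equal
    then show ?thesis using domG[OF ya] by simp
  next
    case greater
    have "((1/t) *\<^sub>R y, (1/t) * a) \<in> G" using subspace_scale[OF G ya, of "1/t"] by simp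
    then have "\<xi> \<le> p ((1/t) *\<^sub>R y + x0) - (1/t) * a" by (rule upper)
    then have "t * \<xi> \<le> t * (p ((1/t) *\<^sub>R y + x0) - (1/t) * a)" using greater by (simp add: mult_left_mono)
    moreover have "t * p ((1/t) *\<^sub>R y + x0) = p (y + t *\<^sub>R x0)"
      using homog[OF greater, of "(1/t) *\<^sub>R y + x0"] greater by (simp add: algebra_simps)
    ultimately show ?thesis using greater by (simp add: algebra_simps)
  qed
  then show ?thesis by blast
qed

lemma span_insert_subspace:
  assumes "subspace M"
  shows "span (insert v M) = {g + t *\<^sub>R v | g t. g \<in> M}"
proof -
  have "span M = M" using assms by (rule span_eq_iff[THEN iffD2])
  then have "span (insert v M) = {x. \<exists>t. x - t *\<^sub>R v \<in> M}" by (simp only: span_insert)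
  also have "\<dots> = {g + t *\<^sub>R v | g t. g \<in> M}"
  proof (intro set_eqI iffI)
    fix x assume "x \<in> {x. \<exists>t. x - t *\<^sub>R v \<in> M}"
    then obtain t where "x - t *\<^sub>R v \<in> M" by blast
    then show "x \<in> {g + t *\<^sub>R v | g t. g \<in> M}" by (intro CollectI exI[of _ "x - t *\<^sub>R v"] exI[of _ t]) simp
  next
    fix x assume "x \<in> {g + t *\<^sub>R v | g t. g \<in> M}"
    then obtain g t where "g \<in> M" "x = g + t *\<^sub>R v" by blast
    then show "x \<in> {x. \<exists>t. x - t *\<^sub>R v \<in> M}" by (intro CollectI exI[of _ t]) simp
  qed
  finally show ?thesis .
qed

text \<open>A dominated graph that is maximal among dominated subspaces is defined everywhere:
  otherwise adjoining a missing point with the value from the extension step enlarges it.\<close>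
lemma maximal_dominated_graph_total:
  fixes p :: "'v::real_vector \<Rightarrow> real"
  assumes p: "sublinear p" and M: "subspace M" "dominated_by p M"
    and maximal: "\<And>X. subspace X \<Longrightarrow> dominated_by p X \<Longrightarrow> M \<subseteq> X \<Longrightarrow> X = M"
  shows "\<exists>a. (x, a) \<in> M"
proof (rule ccontr)
  assume x: "\<nexists>a. (x, a) \<in> M"
  obtain \<xi> where \<xi>: "\<forall>(y, a) \<in> M. \<forall>t. a + t * \<xi> \<le> p (y + t *\<^sub>R x)"
    using dominated_extension_value[OF p M] by blast
  define M' where "M' = span (insert (x, \<xi>) M)"
  have ext: "M \<subseteq> M'" using span_superset[of "insert (x, \<xi>) M"] unfolding M'_def by blast
  have "dominated_by p M'"
    unfolding dominated_by_def
  proof (intro ballI, clarify)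
    fix z b assume "(z, b) \<in> M'"
    then obtain g t where g: "g \<in> M" "(z, b) = g + t *\<^sub>R (x, \<xi>)"
      unfolding M'_def span_insert_subspace[OF M(1)] by blast
    obtain y a where ya: "g = (y, a)" by (cases g)
    have "a + t * \<xi> \<le> p (y + t *\<^sub>R x)" using \<xi> g(1) unfolding ya by blast
    then show "b \<le> p z" using g(2) unfolding ya by simp
  qed
  then have "M' = M" using maximal[OF _ _ ext] unfolding M'_def by (blast intro: subspace_span)
  moreover have "(x, \<xi>) \<in> M'" unfolding M'_def by (rule span_base) simp
  ultimately show False using x by blast
qed

lemma total_dominated_graph_linear:
  fixes p :: "'v::real_vector \<Rightarrow> real"
  assumes p: "sublinear p" and G: "subspace G" "dominated_by p G" and total: "\<And>x. \<exists>a. (x, a) \<in> G"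
  shows "\<exists>f. linear f \<and> (\<forall>x. (x, f x) \<in> G) \<and> (\<forall>(x, a) \<in> G. f x = a)"
proof -
  have unique: "a = b" if "(x, a) \<in> G" "(x, b) \<in> G" for x a b
  proof -
    have "(x, a) - (x, b) \<in> G" "(x, b) - (x, a) \<in> G" using subspace_diff[OF G(1)] that by blast+
    then have "a - b \<le> p 0" "b - a \<le> p 0" using G(2) unfolding dominated_by_def by auto
    then show ?thesis using sublinear_zero[OF p] by simp
  qed
  define f where "f x = (SOME a. (x, a) \<in> G)" for x
  have graph: "(x, f x) \<in> G" for x unfolding f_def using total by (rule someI_ex)
  have "linear f"
  proof (rule linearI)
    show "f (x + y) = f x + f y" for x y
      using unique[OF graph] subspace_add[OF G(1) graph graph] by simp
    show "f (c *\<^sub>R x) = c *\<^sub>R f x" for c x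
      using unique[OF graph] subspace_scale[OF G(1) graph] by simp
  qed
  then show ?thesis using graph unique[OF graph] by blast
qed

text \<open>Zorn's lemma yields a maximal dominated
  graph containing the given one.\<close>
theorem Hahn_Banach_sublinear:
  fixes p :: "'v::real_vector \<Rightarrow> real" and S :: "('v \<times> real) set"
  assumes p: "sublinear p" and S: "subspace S" and domS: "dominated_by p S"
  shows "\<exists>f. linear f \<and> (\<forall>(x, a) \<in> S. f x = a) \<and> (\<forall>x. f x \<le> p x)"
proof -
  define \<D> where "\<D> = {G. subspace G \<and> S \<subseteq> G \<and> dominated_by p G}"
  have "\<exists>M\<in>\<D>. \<forall>X\<in>\<D>. M \<subseteq> X \<longrightarrow> X = M"
  proof (rule Zorn_Lemma2, intro ballI)
    fix \<C> assume \<C>: "\<C> \<in> chains \<D>"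
    show "\<exists>U\<in>\<D>. \<forall>X\<in>\<C>. X \<subseteq> U"
    proof (cases "\<C> = {}")
      case True
      then show ?thesis using S domS unfolding \<D>_def by blast
    next
      case False
      have "\<C> \<in> chains {G. subspace G}" using \<C> unfolding chains_def \<D>_def by blast
      then have "subspace (\<Union>\<C>)" using False by (rule subspace_Union_chain)
      moreover have "S \<subseteq> \<Union>\<C>" using False \<C> unfolding chains_def \<D>_def by blast
      moreover have "dominated_by p (\<Union>\<C>)" using \<C> unfolding chains_def \<D>_def dominated_by_def by blast
      ultimately show ?thesis unfolding \<D>_def by blast
    qed
  qed
  then obtain M where "M \<in> \<D>" and maximal: "\<And>X. X \<in> \<D> \<Longrightarrow> M \<subseteq> X \<Longrightarrow> X = M"
    by blast
  then have M: "subspace M" "S \<subseteq> M" "dominated_by p M" unfolding \<D>_def by auto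
  have "\<exists>a. (x, a) \<in> M" for x
    by (rule maximal_dominated_graph_total[OF p M(1,3)]) (use maximal M(2) in \<open>auto simp: \<D>_def\<close>)
  then obtain f where f: "linear f" "\<forall>x. (x, f x) \<in> M" "\<forall>(x, a) \<in> M. f x = a"
    using total_dominated_graph_linear[OF p M(1,3)] by blast
  have "\<forall>x. f x \<le> p x" using f(2) M(3) unfolding dominated_by_def by blast
  moreover have "\<forall>(x, a) \<in> S. f x = a" using f(3) M(2) by auto
  ultimately show ?thesis using f(1) by blast
qed

lemma subspace_line_extension:
  assumes E: "subspace E"
  shows "subspace {(z + t *\<^sub>R x0, t) | z t. z \<in> E}" (is "subspace ?S")
  unfolding subspace_def
proof (intro conjI ballI allI)
  show "0 \<in> ?S" using subspace_0[OF E] by (force simp: zero_prod_def)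
next
  fix u v assume "u \<in> ?S" "v \<in> ?S"
  then obtain z t z' t' where "z \<in> E" "z' \<in> E" "u = (z + t *\<^sub>R x0, t)" "v = (z' + t' *\<^sub>R x0, t')"
    by blast
  then show "u + v \<in> ?S" using subspace_add[OF E]
    by (auto intro!: exI[of _ "z + z'"] exI[of _ "t + t'"] simp: algebra_simps)
next
  fix c :: real and u assume "u \<in> ?S"
  then obtain z t where "z \<in> E" "u = (z + t *\<^sub>R x0, t)" by blast
  then show "c *\<^sub>R u \<in> ?S" using subspace_scale[OF E]
    by (auto intro!: exI[of _ "c *\<^sub>R z"] exI[of _ "c * t"] simp: algebra_simps)
qed

lemma coefficient_bound_infdist:
  assumes E: "subspace E" and z: "z \<in> E"
  shows "\<bar>t\<bar> * infdist x0 E \<le> norm (z + t *\<^sub>R x0)"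
proof (cases "t = 0")
  case True then show ?thesis by simp
next
  case False
  have "(-(1/t)) *\<^sub>R z \<in> E" using subspace_scale[OF E z] .
  then have "infdist x0 E \<le> dist x0 ((-(1/t)) *\<^sub>R z)" by (rule infdist_le)
  also have "\<dots> = norm ((1/t) *\<^sub>R (z + t *\<^sub>R x0))" using False by (simp add: dist_norm algebra_simps)
  also have "\<dots> = norm (z + t *\<^sub>R x0) / \<bar>t\<bar>" by simp
  finally show ?thesis using False by (simp add: field_simps mult.commute)
qed

text \<open>A point outside a closed subspace is separated from it by a bounded functional; this is
  what makes closed subspaces weakly closed.  Apply Hahn--Banach to the functional
  z + t x0 \<mapsto> t, which is dominated by norm / d with d the distance from x0 to E.\<close>
lemma separating_functional:
  fixes E :: "'v::real_normed_vector set"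
  assumes closed: "closed E" and E: "subspace E" and x0: "x0 \<notin> E"
  shows "\<exists>f::'v \<Rightarrow>\<^sub>L real. (\<forall>z\<in>E. f z = 0) \<and> f x0 = 1"
proof -
  define d where "d = infdist x0 E"
  have "E \<noteq> {}" using subspace_0[OF E] by blast
  then have d: "d > 0"
    using x0 closed in_closed_iff_infdist_zero[of E x0] infdist_nonneg[of x0 E] unfolding d_def by auto
  define p where "p y = norm y / d" for y :: 'v
  have p: "sublinear p"
    unfolding sublinear_def p_def using d by (simp add: add_divide_distrib[symmetric] divide_right_mono norm_triangle_ineq)
  define S where "S = {(z + t *\<^sub>R x0, t) | z t. z \<in> E}"
  have "t \<le> p (z + t *\<^sub>R x0)" if "z \<in> E" for z t
    using coefficient_bound_infdist[OF E that, of t x0] d unfolding p_def d_def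
    by (simp add: field_simps) (meson abs_ge_self order_trans mult_right_mono less_imp_le)
  then have "dominated_by p S" unfolding dominated_by_def S_def by blast
  then obtain f where f: "linear f" and fS: "\<forall>(x, a) \<in> S. f x = a" and fp: "\<forall>x. f x \<le> p x"
    using Hahn_Banach_sublinear[OF p subspace_line_extension[OF E]] unfolding S_def by blast
  have "bounded_linear f"
  proof (rule bounded_linear_intro[where K="1/d"])
    show "f (x + y) = f x + f y" "f (r *\<^sub>R x) = r *\<^sub>R f x" for x y r
      using linear_add[OF f] linear_scale[OF f] by auto
    show "norm (f x) \<le> norm x * (1/d)" for x
      using fp[rule_format, of x] fp[rule_format, of "-x"] linear_neg[OF f] by (simp add: p_def abs_le_iff)
  qed
  moreover have "f z = 0" if "z \<in> E" for z
    using fS that unfolding S_def by (force intro!: exI[of _ z] exI[of _ 0])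
  moreover have "f x0 = 1"
    using fS subspace_0[OF E] unfolding S_def by (force intro!: exI[of _ 0] exI[of _ 1])
  ultimately show ?thesis by (intro exI[of _ "Blinfun f"]) (simp add: bounded_linear_Blinfun_apply)
qed

lemma eventually_net_filter:
  assumes dir: "directed TYPE('i::preorder)"
  shows "eventually P (net_filter::'i filter) \<longleftrightarrow> (\<exists>k. \<forall>j. k \<le> j \<longrightarrow> P j)"
proof -
  have "eventually P (INF k\<in>UNIV. principal {k..}) \<longleftrightarrow> (\<exists>k\<in>UNIV. eventually P (principal {k::'i..}))"
  proof (rule eventually_INF_base)
    show "(UNIV::'i set) \<noteq> {}" by simp
    fix a b :: 'i
    obtain k where "a \<le> k" "b \<le> k" using dir unfolding directed_def by blast
    then have "{k..} \<subseteq> {a..} \<inter> {b..}" by (auto dest: order_trans[rotated])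
    then show "\<exists>k\<in>UNIV. principal {k..} \<le> inf (principal {a..}) (principal {b..})" by auto
  qed
  then show ?thesis unfolding net_filter_def eventually_principal by (simp add: Ball_def)
qed

lemma net_filter_nontrivial:
  assumes dir: "directed TYPE('i::preorder)"
  shows "(net_filter::'i filter) \<noteq> bot"
proof
  assume "(net_filter::'i filter) = bot"
  then have "eventually (\<lambda>_. False) (net_filter::'i filter)" by simp
  then obtain k :: 'i where "\<forall>j. k \<le> j \<longrightarrow> False" unfolding eventually_net_filter[OF dir] by blast
  then show False using order_refl[of k] by blast
qed

section \<open>Weak*-continuous functionals on a bidual\<close>

lemma generate_topology_on_finite_basis:
  assumes "generate_topology_on S U"
  shows "\<forall>z\<in>U. \<exists>Fs. finite Fs \<and> Fs \<subseteq> S \<and> z \<in> \<Inter>Fs \<and> \<Inter>Fs \<subseteq> U"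
  using assms
proof (induction rule: generate_topology_on.induct)
  case Empty then show ?case by simp
next
  case (Int a b)
  show ?case
  proof
    fix z assume z: "z \<in> a \<inter> b"
    have "\<exists>Fs. finite Fs \<and> Fs \<subseteq> S \<and> z \<in> \<Inter>Fs \<and> \<Inter>Fs \<subseteq> a" using Int.IH(1) z by blast
    then obtain F1 where F1: "finite F1" "F1 \<subseteq> S" "z \<in> \<Inter>F1" "\<Inter>F1 \<subseteq> a" by (elim exE conjE)
    have "\<exists>Fs. finite Fs \<and> Fs \<subseteq> S \<and> z \<in> \<Inter>Fs \<and> \<Inter>Fs \<subseteq> b" using Int.IH(2) z by blast
    then obtain F2 where F2: "finite F2" "F2 \<subseteq> S" "z \<in> \<Inter>F2" "\<Inter>F2 \<subseteq> b" by (elim exE conjE)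
    have "\<Inter>(F1 \<union> F2) = \<Inter>F1 \<inter> \<Inter>F2" by (rule Inter_Un_distrib)
    then show "\<exists>Fs. finite Fs \<and> Fs \<subseteq> S \<and> z \<in> \<Inter>Fs \<and> \<Inter>Fs \<subseteq> a \<inter> b"
      using F1 F2 by (intro exI[of _ "F1 \<union> F2"]) auto
  qed
next
  case (UN K)
  show ?case
  proof
    fix z assume "z \<in> \<Union>K"
    then obtain k where k: "k \<in> K" "z \<in> k" by blast
    have "\<exists>Fs. finite Fs \<and> Fs \<subseteq> S \<and> z \<in> \<Inter>Fs \<and> \<Inter>Fs \<subseteq> k" using UN.IH[OF k(1)] k(2) by (rule bspec)
    then obtain Fs where Fs: "finite Fs" "Fs \<subseteq> S" "z \<in> \<Inter>Fs" "\<Inter>Fs \<subseteq> k" by (elim exE conjE)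
    show "\<exists>Fs. finite Fs \<and> Fs \<subseteq> S \<and> z \<in> \<Inter>Fs \<and> \<Inter>Fs \<subseteq> \<Union>K"
    proof (intro exI[of _ Fs] conjI)
      show "\<Inter>Fs \<subseteq> \<Union>K" using subset_trans[OF Fs(4) Union_upper[OF k(1)]] .
    qed (use Fs in \<open>simp_all\<close>)
  qed
next
  case (Basis s)
  then show ?case by (intro ballI exI[of _ "{s}"]) auto
qed

lemma topspace_wstar [simp]: "topspace (wstar :: (('x::real_normed_vector \<Rightarrow>\<^sub>L real) \<Rightarrow>\<^sub>L real) topology) = UNIV"
proof -
  have "UNIV \<in> {{x''. blinfun_apply x'' x' \<in> U} | (x' :: 'x \<Rightarrow>\<^sub>L real) U. open (U::real set)}"
    by (intro CollectI exI[of _ 0] exI[of _ UNIV]) simp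
  then show ?thesis unfolding wstar_def topology_generated_by_topspace by (rule Union_upper[THEN top_le])
qed

lemma continuous_map_wstar_eval:
  "continuous_map (wstar :: (('x::real_normed_vector \<Rightarrow>\<^sub>L real) \<Rightarrow>\<^sub>L real) topology) euclideanreal
     (\<lambda>x''. blinfun_apply x'' x')"
  unfolding continuous_map topspace_wstar
proof (intro conjI allI impI)
  fix U :: "real set" assume "openin euclideanreal U"
  then have "openin wstar {x''. blinfun_apply x'' x' \<in> U}"
    unfolding wstar_def by (intro topology_generated_by_Basis) auto
  then show "openin wstar {x'' \<in> UNIV. blinfun_apply x'' x' \<in> U}" by simp
qed simp

lemma wstar_neighbourhood_of_zero:
  fixes U :: "(('x::real_normed_vector \<Rightarrow>\<^sub>L real) \<Rightarrow>\<^sub>L real) set"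
  assumes "openin wstar U" "0 \<in> U"
  obtains X \<delta> where "finite X" "\<delta> > 0" "\<And>y. \<forall>x'\<in>X. \<bar>blinfun_apply y x'\<bar> < \<delta> \<Longrightarrow> y \<in> U"
proof -
  define S where "S = {{x''. blinfun_apply x'' x' \<in> V} | (x' :: 'x \<Rightarrow>\<^sub>L real) V. open (V::real set)}"
  have "generate_topology_on S U" using assms(1) unfolding wstar_def S_def by (rule openin_topology_generated_by)
  from bspec[OF generate_topology_on_finite_basis[OF this] assms(2)]
  obtain \<F> where \<F>: "finite \<F>" "\<F> \<subseteq> S" "0 \<in> \<Inter>\<F>" "\<Inter>\<F> \<subseteq> U"
    by (elim exE conjE)
  have "\<forall>s\<in>\<F>. \<exists>q. snd q > 0 \<and> (\<forall>y. \<bar>blinfun_apply y (fst q)\<bar> < snd q \<longrightarrow> y \<in> s)"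
  proof
    fix s assume "s \<in> \<F>"
    then obtain x' V where s: "s = {x''. blinfun_apply x'' x' \<in> V}" and V: "open V"
      using \<F>(2) unfolding S_def by blast
    have "0 \<in> V" using \<F>(3) \<open>s \<in> \<F>\<close> unfolding s by auto
    then obtain \<epsilon> where "\<epsilon> > 0" "ball 0 \<epsilon> \<subseteq> V" using V open_contains_ball_eq by blast
    then show "\<exists>q. snd q > 0 \<and> (\<forall>y. \<bar>blinfun_apply y (fst q)\<bar> < snd q \<longrightarrow> y \<in> s)"
      unfolding s by (intro exI[of _ "(x', \<epsilon>)"]) (auto simp: subset_iff)
  qed
  then obtain q where q: "\<forall>s\<in>\<F>. snd (q s) > 0 \<and> (\<forall>y. \<bar>blinfun_apply y (fst (q s))\<bar> < snd (q s) \<longrightarrow> y \<in> s)"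
    by (rule bchoice[THEN exE]) blast
  define pt where "pt s = fst (q s)" for s
  define \<epsilon> where "\<epsilon> s = snd (q s)" for s
  have pt: "\<epsilon> s > 0 \<and> (\<forall>y. \<bar>blinfun_apply y (pt s)\<bar> < \<epsilon> s \<longrightarrow> y \<in> s)" if "s \<in> \<F>" for s
    using q that unfolding pt_def \<epsilon>_def by blast
  define \<delta> where "\<delta> = Min (insert 1 (\<epsilon> ` \<F>))"
  show ?thesis
  proof (rule that[of "pt ` \<F>" \<delta>])
    show "finite (pt ` \<F>)" using \<F>(1) by simp
    show "\<delta> > 0" unfolding \<delta>_def using \<F>(1) pt by (subst Min_gr_iff) auto
    fix y assume y: "\<forall>x'\<in>pt ` \<F>. \<bar>blinfun_apply y x'\<bar> < \<delta>"
    have "y \<in> s" if "s \<in> \<F>" for s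
    proof -
      have "\<delta> \<le> \<epsilon> s" unfolding \<delta>_def using \<F>(1) that by (intro Min_le) auto
      moreover have "\<bar>blinfun_apply y (pt s)\<bar> < \<delta>" using y that by blast
      ultimately show ?thesis using pt[OF that] by simp
    qed
    then have "y \<in> \<Inter>\<F>" by blast
    then show "y \<in> U" using \<F>(4) by (rule subsetD[rotated])
  qed
qed

lemma linear_combination_of_functionals:
  fixes f :: "'v::real_vector \<Rightarrow> real" and g :: "'k \<Rightarrow> 'v \<Rightarrow> real"
  assumes "finite K" "linear f" "\<And>k. linear (g k)" "subspace W"
    and "\<And>y. y \<in> W \<Longrightarrow> \<forall>k\<in>K. g k y = 0 \<Longrightarrow> f y = 0"
  shows "\<exists>c. \<forall>y\<in>W. f y = (\<Sum>k\<in>K. c k * g k y)"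
  using assms(1,4,5)
proof (induction K arbitrary: W rule: finite_induct)
  case empty then show ?case by auto
next
  case (insert k0 K W)
  show ?case
  proof (cases "\<forall>y\<in>W. g k0 y = 0")
    case True
    then obtain c where c: "\<forall>y\<in>W. f y = (\<Sum>k\<in>K. c k * g k y)" using insert.IH[OF insert.prems(1)] insert.prems(2) by auto
    show ?thesis
    proof (intro exI[of _ "c(k0 := 0)"] ballI)
      fix y assume "y \<in> W"
      moreover have "(\<Sum>k\<in>K. (c(k0 := 0)) k * g k y) = (\<Sum>k\<in>K. c k * g k y)"
        using insert.hyps(2) by (intro sum.cong) auto
      ultimately show "f y = (\<Sum>k\<in>insert k0 K. (c(k0 := 0)) k * g k y)" using c insert.hyps by simp
    qed
  next
    case False
    then obtain y0 where y0: "y0 \<in> W" "g k0 y0 \<noteq> 0" by blast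
    define y1 where "y1 = (1 / g k0 y0) *\<^sub>R y0"
    have y1: "y1 \<in> W" "g k0 y1 = 1"
      using y0 subspace_scale[OF insert.prems(1)] linear_scale[OF assms(3)] unfolding y1_def by auto
    define W' where "W' = {y\<in>W. g k0 y = 0}"
    have "subspace W'"
      using insert.prems(1) linear_add[OF assms(3)] linear_scale[OF assms(3)] linear_0[OF assms(3)]
      unfolding W'_def subspace_def by auto
    then have "\<exists>c. \<forall>y\<in>W'. f y = (\<Sum>k\<in>K. c k * g k y)"
      by (rule insert.IH) (use insert.prems(2) in \<open>auto simp: W'_def\<close>)
    then obtain c where c: "\<forall>y\<in>W'. f y = (\<Sum>k\<in>K. c k * g k y)" by blast
    define c' where "c' = c(k0 := f y1 - (\<Sum>k\<in>K. c k * g k y1))"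
    show ?thesis
    proof (intro exI[of _ c'] ballI)
      fix y assume yW: "y \<in> W"
      define y' where "y' = y - g k0 y *\<^sub>R y1"
      have "y' \<in> W'"
        using yW y1 subspace_diff[OF insert.prems(1)] subspace_scale[OF insert.prems(1)]
          linear_diff[OF assms(3)] linear_scale[OF assms(3)] unfolding y'_def W'_def by simp
      have "f y = f y' + g k0 y * f y1"
        unfolding y'_def using linear_diff[OF assms(2)] linear_scale[OF assms(2)] by simp
      also have "f y' = (\<Sum>k\<in>K. c k * g k y')" using c \<open>y' \<in> W'\<close> by blast
      also have "(\<Sum>k\<in>K. c k * g k y') + g k0 y * f y1 = (\<Sum>k\<in>K. c k * g k y) + c' k0 * g k0 y"
      proof -
        have gy': "g k y' = g k y - g k0 y * g k y1" for k
          unfolding y'_def using linear_diff[OF assms(3)] linear_scale[OF assms(3)] by simp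
        have "(\<Sum>k\<in>K. c k * (g k y - g k0 y * g k y1)) = (\<Sum>k\<in>K. c k * g k y) - g k0 y * (\<Sum>k\<in>K. c k * g k y1)"
          by (simp add: sum_subtractf sum_distrib_left algebra_simps)
        then show ?thesis unfolding gy' c'_def by (simp add: algebra_simps)
      qed
      also have "(\<Sum>k\<in>K. c k * g k y) = (\<Sum>k\<in>K. c' k * g k y)"
        unfolding c'_def using insert.hyps(2) by (intro sum.cong) auto
      finally show "f y = (\<Sum>k\<in>insert k0 K. c' k * g k y)" using insert.hyps by simp
    qed
  qed
qed

lemma wstar_continuous_functional:
  fixes \<Phi> :: "(('x::real_normed_vector \<Rightarrow>\<^sub>L real) \<Rightarrow>\<^sub>L real) \<Rightarrow> real"
  assumes cont: "continuous_map wstar euclideanreal \<Phi>" and lin: "linear \<Phi>"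
  shows "\<exists>c'. \<forall>x''. \<Phi> x'' = blinfun_apply x'' c'"
proof -
  define U where "U = {x''. \<Phi> x'' \<in> {-1<..<1}}"
  have "openin euclideanreal {-1<..<1::real}" unfolding open_openin[symmetric] by (rule open_greaterThanLessThan)
  then have "openin wstar {x'' \<in> topspace wstar. \<Phi> x'' \<in> {-1<..<1}}" using cont unfolding continuous_map by blast
  then have "openin wstar U" unfolding U_def by simp
  moreover have "0 \<in> U" unfolding U_def using linear_0[OF lin] by simp
  ultimately obtain X \<delta> where X: "finite X" "\<delta> > 0"
    and small: "\<And>y. \<forall>x'\<in>X. \<bar>blinfun_apply y x'\<bar> < \<delta> \<Longrightarrow> y \<in> U"
    by (rule wstar_neighbourhood_of_zero) blast
  have kernel: "\<Phi> y = 0" if y: "\<forall>x'\<in>X. blinfun_apply y x' = 0" for y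
  proof (rule ccontr)
    assume ne: "\<Phi> y \<noteq> 0"
    have "\<forall>x'\<in>X. \<bar>blinfun_apply ((2 / \<bar>\<Phi> y\<bar>) *\<^sub>R y) x'\<bar> < \<delta>"
      using y X(2) by (simp add: blinfun.scaleR_left)
    then have "(2 / \<bar>\<Phi> y\<bar>) *\<^sub>R y \<in> U" by (rule small)
    moreover have "\<bar>\<Phi> ((2 / \<bar>\<Phi> y\<bar>) *\<^sub>R y)\<bar> = 2" using ne linear_scale[OF lin] by (simp add: abs_mult)
    ultimately show False unfolding U_def by (auto simp: abs_if split: if_splits)
  qed
  have "\<exists>c. \<forall>y\<in>UNIV. \<Phi> y = (\<Sum>x'\<in>X. c x' * blinfun_apply y x')"
  proof (rule linear_combination_of_functionals[where g="\<lambda>x' y. blinfun_apply y x'", OF X(1) lin])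
    show "linear (\<lambda>y. blinfun_apply y x')" for x' :: "'x \<Rightarrow>\<^sub>L real"
      by (rule bounded_linear.linear[OF blinfun.bounded_linear_left])
    show "\<Phi> y = 0" if "\<forall>x'\<in>X. blinfun_apply y x' = 0" for y using that by (rule kernel)
  qed simp
  then obtain c where "\<And>y. \<Phi> y = (\<Sum>x'\<in>X. c x' * blinfun_apply y x')" by blast
  then show ?thesis
    by (intro exI[of _ "\<Sum>x'\<in>X. c x' *\<^sub>R x'"]) (simp add: blinfun.sum_right blinfun.scaleR_right)
qed

section \<open>Arens adjoints\<close>

context
  fixes m :: "'a::real_normed_vector \<Rightarrow> 'b::real_normed_vector \<Rightarrow> 'c::real_normed_vector"
  assumes m: "bounded_bilinear m"
begin

lemma adj1_apply: "blinfun_apply (adj1 m z' x) y = blinfun_apply z' (m x y)"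
proof -
  have "bounded_linear (\<lambda>y. blinfun_apply z' (m x y))"
    by (rule bounded_linear_compose[OF blinfun.bounded_linear_right bounded_bilinear.bounded_linear_right[OF m]])
  then show ?thesis unfolding adj1_def by (simp add: bounded_linear_Blinfun_apply)
qed

lemma bounded_bilinear_adj1: "bounded_bilinear (\<lambda>x z'. adj1 m z' x)"
proof
  obtain K where K: "K > 0" "\<And>a b. norm (m a b) \<le> norm a * norm b * K"
    using bounded_bilinear.pos_bounded[OF m] by blast
  have "norm (adj1 m z' x) \<le> norm x * norm z' * K" for z' x
  proof (rule norm_blinfun_bound)
    show "0 \<le> norm x * norm z' * K" using K by simp
    fix y
    have "norm (blinfun_apply z' (m x y)) \<le> norm z' * norm (m x y)" by (rule norm_blinfun)
    also have "\<dots> \<le> norm z' * (norm x * norm y * K)" using K(2) by (simp add: mult_left_mono)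
    finally show "norm (blinfun_apply (adj1 m z' x) y) \<le> norm x * norm z' * K * norm y"
      by (simp add: adj1_apply algebra_simps)
  qed
  then show "\<exists>K. \<forall>x z'. norm (adj1 m z' x) \<le> norm x * norm z' * K" by blast
qed (rule blinfun_eqI;
     simp add: adj1_apply blinfun.add_left blinfun.add_right blinfun.scaleR_left blinfun.scaleR_right
       bounded_bilinear.add_left[OF m] bounded_bilinear.scaleR_left[OF m])+

lemma bounded_linear_adj1: "bounded_linear (adj1 m z')"
  using bounded_bilinear.bounded_linear_left[OF bounded_bilinear_adj1] .

lemma adj2_apply: "blinfun_apply (adj2 m y'' z') x = blinfun_apply y'' (adj1 m z' x)"
proof -
  have "bounded_linear (\<lambda>x. blinfun_apply y'' (adj1 m z' x))"
    by (rule bounded_linear_compose[OF blinfun.bounded_linear_right bounded_linear_adj1])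
  then show ?thesis unfolding adj2_def by (simp add: bounded_linear_Blinfun_apply)
qed

lemma bounded_linear_adj2: "bounded_linear (adj2 m y'')"
proof -
  obtain K where K: "K > 0" "\<And>x z'. norm (adj1 m z' x) \<le> norm x * norm z' * K"
    using bounded_bilinear.pos_bounded[OF bounded_bilinear_adj1] by blast
  show ?thesis
  proof (rule bounded_linear_intro[where K="norm y'' * K"])
    show "adj2 m y'' (z1 + z2) = adj2 m y'' z1 + adj2 m y'' z2" for z1 z2
      by (rule blinfun_eqI)
        (simp add: adj2_apply blinfun.add_left blinfun.add_right bounded_bilinear.add_right[OF bounded_bilinear_adj1])
    show "adj2 m y'' (r *\<^sub>R z) = r *\<^sub>R adj2 m y'' z" for r z
      by (rule blinfun_eqI)
        (simp add: adj2_apply blinfun.scaleR_left blinfun.scaleR_right bounded_bilinear.scaleR_right[OF bounded_bilinear_adj1])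
    fix z
    have "norm (adj2 m y'' z) \<le> norm y'' * K * norm z"
    proof (rule norm_blinfun_bound)
      show "0 \<le> norm y'' * K * norm z" using K by simp
      fix x
      have "norm (blinfun_apply y'' (adj1 m z x)) \<le> norm y'' * norm (adj1 m z x)" by (rule norm_blinfun)
      also have "\<dots> \<le> norm y'' * (norm x * norm z * K)" using K(2) by (simp add: mult_left_mono)
      finally show "norm (blinfun_apply (adj2 m y'' z) x) \<le> norm y'' * K * norm z * norm x"
        by (simp add: adj2_apply algebra_simps)
    qed
    then show "norm (adj2 m y'' z) \<le> norm z * (norm y'' * K)" by (simp add: algebra_simps)
  qed
qed

lemma adj3_apply: "blinfun_apply (adj3 m x'' y'') z' = blinfun_apply x'' (adj2 m y'' z')"
proof -
  have "bounded_linear (\<lambda>z'. blinfun_apply x'' (adj2 m y'' z'))"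
    by (rule bounded_linear_compose[OF blinfun.bounded_linear_right bounded_linear_adj2])
  then show ?thesis unfolding adj3_def by (simp add: bounded_linear_Blinfun_apply)
qed

end

lemma adj1_assoc:
  fixes m :: "'a::real_normed_vector \<Rightarrow> 'b::real_normed_vector \<Rightarrow> 'b"
  assumes m: "bounded_bilinear m" and assoc: "\<And>a0 a b. m a0 (m a b) = m (mul a0 a) b"
  shows "adj1 m (adj1 m z' a0) a = adj1 m z' (mul a0 a)"
  by (rule blinfun_eqI) (simp add: adj1_apply[OF m] assoc)

section \<open>The Cohen--Hewitt factorization theorem\<close>

definition invertible_on :: "'x::real_normed_vector set \<Rightarrow> ('x \<Rightarrow> 'x) \<Rightarrow> real \<Rightarrow> bool" where
  "invertible_on E T C \<longleftrightarrow> C > 0 \<and> T ` E \<subseteq> E \<and> E \<subseteq> T ` E \<and> (\<forall>z\<in>E. norm z \<le> C * norm (T z))"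

lemma invertible_onD:
  assumes "invertible_on E T C"
  shows "C > 0" "z \<in> E \<Longrightarrow> T z \<in> E" "w \<in> E \<Longrightarrow> \<exists>z\<in>E. T z = w"
    "z \<in> E \<Longrightarrow> norm z \<le> C * norm (T z)"
  using assms unfolding invertible_on_def by blast+

lemma invertible_on_scaleR:
  assumes E: "subspace E" and c: "c > 0"
  shows "invertible_on E (\<lambda>z. c *\<^sub>R z) (1/c)"
  unfolding invertible_on_def
proof (intro conjI subsetI ballI)
  show "1/c > 0" using c by simp
next
  fix w assume "w \<in> (\<lambda>z. c *\<^sub>R z) ` E"
  then show "w \<in> E" using subspace_scale[OF E] by blast
next
  fix w assume "w \<in> E"
  then have "(1/c) *\<^sub>R w \<in> E" by (rule subspace_scale[OF E])
  moreover have "w = c *\<^sub>R ((1/c) *\<^sub>R w)" using c by simp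
  ultimately show "w \<in> (\<lambda>z. c *\<^sub>R z) ` E" by blast
next
  fix z show "norm z \<le> 1/c * norm (c *\<^sub>R z)" using c by simp
qed

lemma invertible_on_comp:
  assumes T: "invertible_on E T C" and Q: "invertible_on E Q D"
  shows "invertible_on E (\<lambda>z. Q (T z)) (D * C)"
  unfolding invertible_on_def
proof (intro conjI ballI)
  show "D * C > 0" using T Q unfolding invertible_on_def by simp
  show "(\<lambda>z. Q (T z)) ` E \<subseteq> E" "E \<subseteq> (\<lambda>z. Q (T z)) ` E"
    using T Q unfolding invertible_on_def by (fastforce simp: image_subset_iff)+
  fix z assume z: "z \<in> E"
  have "norm z \<le> C * norm (T z)" using T z unfolding invertible_on_def by blast
  also have "\<dots> \<le> C * (D * norm (Q (T z)))"
    using T Q z unfolding invertible_on_def by (intro mult_left_mono) (auto simp: image_subset_iff)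
  finally show "norm z \<le> D * C * norm (Q (T z))" by (simp add: algebra_simps)
qed

text \<open>If T is invertible on E with inverse bounded by C and S has norm at most 1/(2C) on E, the
  equation T z + S z = w is solvable in E: z \<mapsto> T\<inverse>(w - S z) is a contraction with ratio 1/2.\<close>
lemma perturbed_equation_solvable:
  fixes E :: "'x::banach set"
  assumes E: "closed E" "subspace E"
    and T: "linear T" "invertible_on E T C"
    and S: "linear S" "S ` E \<subseteq> E" "\<And>z. z \<in> E \<Longrightarrow> norm (S z) \<le> norm z / (2 * C)"
    and w: "w \<in> E"
  shows "\<exists>z\<in>E. T z + S z = w"
proof -
  have C: "C > 0" by (rule invertible_onD(1)[OF T(2)])
  have "\<forall>v\<in>E. \<exists>z. z \<in> E \<and> T z = v" using invertible_onD(3)[OF T(2)] by blast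
  then obtain G where "\<forall>v\<in>E. G v \<in> E \<and> T (G v) = v" by (rule bchoice[THEN exE])
  then have G: "G v \<in> E" "T (G v) = v" if "v \<in> E" for v using that by blast+
  have Glip: "norm (G a - G b) \<le> C * norm (a - b)" if "a \<in> E" "b \<in> E" for a b
    using invertible_onD(4)[OF T(2) subspace_diff[OF E(2) G(1)[OF that(1)] G(1)[OF that(2)]]]
      G[OF that(1)] G[OF that(2)] linear_diff[OF T(1)] by simp
  have wS: "w - S z \<in> E" if "z \<in> E" for z using subspace_diff[OF E(2) w] S(2) that by blast
  have "\<exists>!z\<in>E. G (w - S z) = z"
  proof (rule Banach_fix)
    show "complete E" using E(1) by (simp add: complete_eq_closed)
    show "E \<noteq> {}" using subspace_0[OF E(2)] by blast
    show "(\<lambda>z. G (w - S z)) ` E \<subseteq> E" using G wS by blast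
    fix z1 z2 assume z: "z1 \<in> E" "z2 \<in> E"
    have "dist (G (w - S z1)) (G (w - S z2)) \<le> C * norm (S (z2 - z1))"
      unfolding dist_norm using Glip[OF wS[OF z(1)] wS[OF z(2)]] linear_diff[OF S(1)] by simp
    also have "\<dots> \<le> C * (norm (z2 - z1) / (2 * C))"
      using S(3)[OF subspace_diff[OF E(2) z(2) z(1)]] C by (intro mult_left_mono) auto
    also have "\<dots> = 1/2 * dist z1 z2" using C by (simp add: dist_norm norm_minus_commute)
    finally show "dist (G (w - S z1)) (G (w - S z2)) \<le> 1/2 * dist z1 z2" .
  qed simp_all
  then obtain z where z: "z \<in> E" "G (w - S z) = z" by blast
  then have "T z = w - S z" using G(2)[OF wS[OF z(1)]] by simp
  then show ?thesis using z(1) by force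
qed

lemma invertible_on_perturb:
  fixes E :: "'x::banach set"
  assumes E: "closed E" "subspace E"
    and T: "linear T" "invertible_on E T C"
    and S: "linear S" "S ` E \<subseteq> E" "\<And>z. z \<in> E \<Longrightarrow> norm (S z) \<le> norm z / (2 * C)"
  shows "invertible_on E (\<lambda>z. T z + S z) (2 * C)"
proof -
  have C: "C > 0" by (rule invertible_onD(1)[OF T(2)])
  have "norm z \<le> 2 * C * norm (T z + S z)" if z: "z \<in> E" for z
  proof -
    have "norm (T z) \<le> norm (T z + S z) + norm (S z)"
      using norm_triangle_ineq4[of "T z + S z" "S z"] by simp
    then have "norm z \<le> C * (norm (T z + S z) + norm (S z))"
      using invertible_onD(4)[OF T(2) z] C by (meson mult_left_mono less_imp_le order_trans)
    also have "\<dots> \<le> C * norm (T z + S z) + norm z / 2"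
      using S(3)[OF z] C by (simp add: field_simps)
    finally show ?thesis by simp
  qed
  moreover have "E \<subseteq> (\<lambda>z. T z + S z) ` E"
    using perturbed_equation_solvable[OF E T S] by (metis (no_types, lifting) image_eqI subsetI)
  moreover have "(\<lambda>z. T z + S z) ` E \<subseteq> E"
    using invertible_onD(2)[OF T(2)] S(2) subspace_add[OF E(2)] by blast
  ultimately show ?thesis unfolding invertible_on_def using C by simp
qed

lemma convergent_geometric_increments:
  fixes f :: "nat \<Rightarrow> 'x::banach"
  assumes q: "0 \<le> q" "q < 1" and incr: "\<And>n. norm (f (Suc n) - f n) \<le> K * q ^ n"
  shows "\<exists>l. f \<longlonglongrightarrow> l"
proof -
  have "summable (\<lambda>n. norm (f (Suc n) - f n))"
    by (rule summable_comparison_test[OF _ summable_mult[OF summable_geometric]])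
       (use q incr in auto)
  then have "summable (\<lambda>n. f (Suc n) - f n)" by (rule summable_norm_cancel)
  then have "(\<lambda>n. f 0 + (\<Sum>k<n. f (Suc k) - f k)) \<longlonglongrightarrow> f 0 + (\<Sum>k. f (Suc k) - f k)"
    by (intro tendsto_add tendsto_const summable_LIMSEQ)
  then show ?thesis by (auto simp: sum_lessThan_telescope)
qed

locale approximate_unit_action =
  fixes act :: "'a::banach \<Rightarrow> 'x::banach \<Rightarrow> 'x" and mlt :: "'a \<Rightarrow> 'a \<Rightarrow> 'a"
    and e :: "'i \<Rightarrow> 'a" and F :: "'i filter" and M :: real
  assumes act: "bounded_bilinear act"
    and assoc: "\<And>a c x. act (mlt a c) x = act a (act c x)"
    and bdd: "\<And>i. norm (e i) \<le> M"
    and F: "F \<noteq> bot"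
    and approx_unit: "\<And>a. ((\<lambda>i. mlt (e i) a) \<longlongrightarrow> a) F"
begin

definition essential :: "'x set" where
  "essential = {z. ((\<lambda>i. act (e i) z) \<longlongrightarrow> z) F}"

text \<open>Products a\<cdot>z are essential, because (e_i a) z \<rightarrow> a z.\<close>
lemma act_essential: "act b z \<in> essential"
proof -
  have "((\<lambda>i. act (mlt (e i) b) z) \<longlongrightarrow> act b z) F"
    by (rule bounded_bilinear.tendsto[OF act approx_unit tendsto_const])
  then show ?thesis unfolding essential_def assoc by simp
qed

lemma subspace_essential: "subspace essential"
proof -
  have "0 \<in> essential" unfolding essential_def by (simp add: bounded_bilinear.zero_right[OF act])
  moreover have "z + w \<in> essential" if "z \<in> essential" "w \<in> essential" for z w
    using that unfolding essential_def mem_Collect_eq bounded_bilinear.add_right[OF act] by (rule tendsto_add)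
  moreover have "c *\<^sub>R z \<in> essential" if "z \<in> essential" for c z
    using that unfolding essential_def mem_Collect_eq bounded_bilinear.scaleR_right[OF act]
    by (intro tendsto_scaleR tendsto_const)
  ultimately show ?thesis unfolding subspace_def by blast
qed

definition K :: real where
  "K = (SOME K. K > 0 \<and> (\<forall>a z. norm (act a z) \<le> norm a * norm z * K))"

lemma K: "K > 0" "norm (act a z) \<le> norm a * norm z * K"
proof -
  have "\<exists>K. K > 0 \<and> (\<forall>a z. norm (act a z) \<le> norm a * norm z * K)"
    using bounded_bilinear.pos_bounded[OF act] by blast
  then have "K > 0 \<and> (\<forall>a z. norm (act a z) \<le> norm a * norm z * K)"
    unfolding K_def by (rule someI_ex)
  then show "K > 0" "norm (act a z) \<le> norm a * norm z * K" by auto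
qed

lemma M_nonneg: "M \<ge> 0" using bdd[of undefined] norm_ge_zero[of "e undefined"] by linarith

lemma norm_act_net: "norm (act (e i) z) \<le> K * M * norm z"
proof -
  have "norm (act (e i) z) \<le> norm (e i) * norm z * K" by (rule K(2))
  also have "\<dots> \<le> M * norm z * K" using bdd[of i] K(1) by (simp add: mult_right_mono)
  finally show ?thesis by (simp add: algebra_simps)
qed

text \<open>The net acts by uniformly bounded operators, so the essential part is closed.\<close>
lemma closed_essential: "closed essential"
  unfolding closed_sequential_limits
proof (intro allI impI, elim conjE)
  fix zs z assume zE: "\<forall>n. zs n \<in> essential" and lim: "zs \<longlonglongrightarrow> z"
  show "z \<in> essential" unfolding essential_def mem_Collect_eq
  proof (rule tendstoI)
    fix \<epsilon> :: real assume \<epsilon>: "\<epsilon> > 0"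
    define L where "L = K * M + 1"
    have L: "L > 0" unfolding L_def using K(1) M_nonneg by (simp add: add_nonneg_pos)
    have "\<epsilon> / (2 * L) > 0" using \<epsilon> L by simp
    then obtain N where "\<forall>n\<ge>N. dist (zs n) z < \<epsilon> / (2 * L)" using lim unfolding LIMSEQ_def by blast
    then obtain n where n: "norm (zs n - z) < \<epsilon> / (2 * L)" unfolding dist_norm by blast
    have "((\<lambda>i. act (e i) (zs n)) \<longlongrightarrow> zs n) F" using zE unfolding essential_def by blast
    then have "eventually (\<lambda>i. dist (act (e i) (zs n)) (zs n) < \<epsilon> / 2) F" by (rule tendstoD) (use \<epsilon> in simp)
    then have "eventually (\<lambda>i. norm (act (e i) (zs n) - zs n) < \<epsilon> / 2) F" by (simp add: dist_norm)
    then show "eventually (\<lambda>i. dist (act (e i) z) z < \<epsilon>) F"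
    proof eventually_elim
      case (elim i)
      have eq: "act (e i) z - z = act (e i) (z - zs n) + (act (e i) (zs n) - zs n) + (zs n - z)"
        using bounded_bilinear.diff_right[OF act] by (simp add: algebra_simps)
      have "norm (act (e i) z - z) \<le> norm (act (e i) (z - zs n)) + norm (act (e i) (zs n) - zs n) + norm (zs n - z)"
        unfolding eq using norm_triangle_ineq[of "act (e i) (z - zs n) + (act (e i) (zs n) - zs n)" "zs n - z"]
          norm_triangle_ineq[of "act (e i) (z - zs n)" "act (e i) (zs n) - zs n"] by linarith
      also have "norm (act (e i) (z - zs n)) \<le> K * M * norm (zs n - z)"
        using norm_act_net[of i "z - zs n"] by (simp add: norm_minus_commute)
      finally have "norm (act (e i) z - z) \<le> L * norm (zs n - z) + norm (act (e i) (zs n) - zs n)"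
        unfolding L_def by (simp add: algebra_simps)
      also have "L * norm (zs n - z) \<le> \<epsilon> / 2" using n L by (simp add: field_simps)
      finally show ?case using elim by (simp add: dist_norm)
    qed
  qed
qed

text \<open>The contraction ratio of the factorization scheme, chosen so that 1 - \<theta> dominates the
  perturbation \<theta>\<cdot>e_i.\<close>
definition \<theta> :: real where "\<theta> = 1 / (2 * (1 + K * M))"

lemma \<theta>: "0 < \<theta>" "\<theta> < 1" "\<theta> * K * M \<le> (1 - \<theta>) / 2"
proof -
  have KM: "K * M \<ge> 0" using K(1) M_nonneg by simp
  then show "0 < \<theta>" "\<theta> < 1" unfolding \<theta>_def by (simp_all add: field_simps)
  show "\<theta> * K * M \<le> (1 - \<theta>) / 2" unfolding \<theta>_def using KM by (simp add: field_simps)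
qed

text \<open>The action of the element r\<cdot>1 + b of the unitization of the algebra.\<close>
definition uop :: "real \<Rightarrow> 'a \<Rightarrow> 'x \<Rightarrow> 'x" where
  "uop r b z = r *\<^sub>R z + act b z"

lemma linear_uop: "linear (uop r b)"
  by (rule linearI)
    (simp_all add: uop_def bounded_bilinear.add_right[OF act] bounded_bilinear.scaleR_right[OF act] algebra_simps)

lemma uop_comp: "uop r b (uop r' b' z) = uop (r * r') (r *\<^sub>R b' + r' *\<^sub>R b + mlt b b') z"
  by (simp add: uop_def assoc bounded_bilinear.add_right[OF act] bounded_bilinear.scaleR_right[OF act]
      bounded_bilinear.add_left[OF act] bounded_bilinear.scaleR_left[OF act] algebra_simps)

text \<open>Passing from stage n to stage n+1 of the scheme multiplies by (1-\<theta>)\<cdot>1 + \<theta> u, up to an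
  error governed by s - u s.\<close>
lemma uop_next:
  "uop ((1-\<theta>)^Suc n) (s + (\<theta> * (1-\<theta>)^n) *\<^sub>R u) z
     = uop (1-\<theta>) (\<theta> *\<^sub>R u) (uop ((1-\<theta>)^n) s z) + act (\<theta> *\<^sub>R (s - mlt u s)) z"
  unfolding uop_comp
  by (simp add: uop_def assoc bounded_bilinear.add_left[OF act] bounded_bilinear.scaleR_left[OF act]
      bounded_bilinear.diff_left[OF act] algebra_simps)

lemma invertible_uop_net: "invertible_on essential (uop (1-\<theta>) (\<theta> *\<^sub>R e i)) (2 / (1-\<theta>))"
proof -
  have "invertible_on essential (\<lambda>z. (1-\<theta>) *\<^sub>R z + act (\<theta> *\<^sub>R e i) z) (2 * (1 / (1-\<theta>)))"
  proof (rule invertible_on_perturb[OF closed_essential subspace_essential])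
    show "linear (\<lambda>z. (1-\<theta>) *\<^sub>R z)" by (rule linear_scaleR)
    show "invertible_on essential (\<lambda>z. (1-\<theta>) *\<^sub>R z) (1 / (1-\<theta>))"
      using \<theta> by (intro invertible_on_scaleR subspace_essential) simp
    show "linear (act (\<theta> *\<^sub>R e i))" by (rule bounded_linear.linear[OF bounded_bilinear.bounded_linear_right[OF act]])
    show "act (\<theta> *\<^sub>R e i) ` essential \<subseteq> essential" using act_essential by blast
    fix z
    have "norm (act (\<theta> *\<^sub>R e i) z) = \<theta> * norm (act (e i) z)"
      using \<theta> by (simp add: bounded_bilinear.scaleR_left[OF act])
    also have "\<dots> \<le> \<theta> * (K * M * norm z)" using \<theta> norm_act_net by (simp add: mult_left_mono)
    also have "\<dots> \<le> (1 - \<theta>) / 2 * norm z"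
      using mult_right_mono[OF \<theta>(3) norm_ge_zero[of z]] by (simp add: algebra_simps)
    finally show "norm (act (\<theta> *\<^sub>R e i) z) \<le> norm z / (2 * (1 / (1-\<theta>)))" using \<theta> by (simp add: field_simps)
  qed
  then show ?thesis by (simp add: uop_def[abs_def])
qed

lemma uop_defect:
  "uop ((1-\<theta>)^n) s y - uop ((1-\<theta>)^Suc n) (s + (\<theta> * (1-\<theta>)^n) *\<^sub>R u) y
     = (\<theta> * (1-\<theta>)^n) *\<^sub>R (y - act u y)"
proof -
  have "uop ((1-\<theta>)^n) s y - uop ((1-\<theta>)^Suc n) (s + (\<theta> * (1-\<theta>)^n) *\<^sub>R u) y
      = ((1-\<theta>)^n - (1-\<theta>)^Suc n) *\<^sub>R y - (\<theta> * (1-\<theta>)^n) *\<^sub>R act u y"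
    unfolding uop_def
    by (simp add: bounded_bilinear.add_left[OF act] bounded_bilinear.scaleR_left[OF act] scaleR_left_diff_distrib)
  also have "(1-\<theta>)^n - (1-\<theta>)^Suc n = \<theta> * (1-\<theta>)^n" by (simp add: algebra_simps)
  finally show ?thesis by (simp add: scaleR_right_diff_distrib)
qed

lemma invertible_next:
  assumes P: "invertible_on essential (uop ((1-\<theta>)^n) s) C"
    and close: "\<theta> * K * norm (s - mlt (e i) s) \<le> (1-\<theta>) / (4 * C)"
  shows "invertible_on essential (uop ((1-\<theta>)^Suc n) (s + (\<theta>*(1-\<theta>)^n) *\<^sub>R e i)) (4 * C / (1-\<theta>))"
proof -
  have C: "C > 0" using P unfolding invertible_on_def by simp
  have QP: "invertible_on essential (\<lambda>z. uop (1-\<theta>) (\<theta> *\<^sub>R e i) (uop ((1-\<theta>)^n) s z)) (2 / (1-\<theta>) * C)"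
    by (rule invertible_on_comp[OF P invertible_uop_net])
  have "invertible_on essential (\<lambda>z. uop (1-\<theta>) (\<theta> *\<^sub>R e i) (uop ((1-\<theta>)^n) s z)
          + act (\<theta> *\<^sub>R (s - mlt (e i) s)) z) (2 * (2 / (1-\<theta>) * C))"
  proof (rule invertible_on_perturb[OF closed_essential subspace_essential _ QP])
    show "linear (\<lambda>z. uop (1-\<theta>) (\<theta> *\<^sub>R e i) (uop ((1-\<theta>)^n) s z))"
      using linear_compose[OF linear_uop linear_uop] by (simp add: o_def)
    show "linear (act (\<theta> *\<^sub>R (s - mlt (e i) s)))"
      by (rule bounded_linear.linear[OF bounded_bilinear.bounded_linear_right[OF act]])
    show "act (\<theta> *\<^sub>R (s - mlt (e i) s)) ` essential \<subseteq> essential" using act_essential by blast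
    fix z
    have "norm (act (\<theta> *\<^sub>R (s - mlt (e i) s)) z) \<le> norm (\<theta> *\<^sub>R (s - mlt (e i) s)) * norm z * K"
      by (rule K(2))
    also have "\<dots> = \<theta> * K * norm (s - mlt (e i) s) * norm z"
      using \<theta>(1) by (simp add: mult_ac)
    also have "\<dots> \<le> (1-\<theta>) / (4 * C) * norm z" using close by (rule mult_right_mono) simp
    finally show "norm (act (\<theta> *\<^sub>R (s - mlt (e i) s)) z) \<le> norm z / (2 * (2 / (1-\<theta>) * C))"
      using \<theta> C by (simp add: field_simps)
  qed
  then have "invertible_on essential (uop ((1-\<theta>)^Suc n) (s + (\<theta>*(1-\<theta>)^n) *\<^sub>R e i)) (2 * (2 / (1-\<theta>) * C))"
    by (simp only: uop_next[abs_def])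
  moreover have "2 * (2 / (1-\<theta>) * C) = 4 * C / (1-\<theta>)" by simp
  ultimately show ?thesis by simp
qed

lemma factorization_step:
  assumes y: "y \<in> essential" and x: "uop ((1-\<theta>)^n) s y = x"
    and P: "invertible_on essential (uop ((1-\<theta>)^n) s) C"
  shows "\<exists>s' y' C'. y' \<in> essential \<and> uop ((1-\<theta>)^Suc n) s' y' = x
           \<and> invertible_on essential (uop ((1-\<theta>)^Suc n) s') C'
           \<and> norm (s' - s) \<le> \<theta> * (1-\<theta>)^n * M \<and> norm (y' - y) \<le> (1/2)^n"
proof -
  have C: "C > 0" by (rule invertible_onD(1)[OF P])
  define C' where "C' = 4 * C / (1-\<theta>)"
  have C': "C' > 0" unfolding C'_def using C \<theta> by simp
  have "eventually (\<lambda>i. dist (mlt (e i) s) s < (1-\<theta>) / (4 * C * \<theta> * K)) F"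
    using \<theta> C K(1) by (intro tendstoD[OF approx_unit]) simp
  moreover have "eventually (\<lambda>i. dist (act (e i) y) y < (1/2)^n / C') F"
    using y C' unfolding essential_def by (intro tendstoD) auto
  ultimately obtain i where i1: "dist (mlt (e i) s) s < (1-\<theta>) / (4 * C * \<theta> * K)"
    and i2: "dist (act (e i) y) y < (1/2)^n / C'"
    using eventually_happens'[OF F eventually_conj] by blast
  define s' where "s' = s + (\<theta> * (1-\<theta>)^n) *\<^sub>R e i"
  define P' where "P' = uop ((1-\<theta>)^Suc n) s'"
  have P': "invertible_on essential P' C'"
  proof -
    have "\<theta> * K * norm (s - mlt (e i) s) \<le> (1-\<theta>) / (4 * C)"
      using i1 \<theta> K(1) C by (simp add: dist_norm norm_minus_commute field_simps)
    then show ?thesis unfolding P'_def C'_def s'_def by (rule invertible_next[OF P])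
  qed
  have defect: "x - P' y = (\<theta> * (1-\<theta>)^n) *\<^sub>R (y - act (e i) y)"
    unfolding P'_def s'_def x[symmetric] by (rule uop_defect)
  have "x - P' y \<in> essential"
    unfolding defect by (rule subspace_scale[OF subspace_essential subspace_diff[OF subspace_essential y act_essential]])
  then obtain d where d: "d \<in> essential" "P' d = x - P' y" using invertible_onD(3)[OF P'] by blast
  have "norm d \<le> C' * norm (P' d)" by (rule invertible_onD(4)[OF P' d(1)])
  also have "\<dots> \<le> C' * norm (y - act (e i) y)"
  proof -
    have "\<theta> * (1-\<theta>)^n \<le> 1" using \<theta> by (simp add: mult_le_one power_le_one)
    moreover have "0 \<le> \<theta> * (1-\<theta>)^n" using \<theta> by simp
    ultimately have "norm (P' d) \<le> norm (y - act (e i) y)"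
      unfolding d(2) defect by (simp add: mult_left_le_one_le)
    then show ?thesis using C' by (simp add: mult_left_mono)
  qed
  also have "\<dots> \<le> (1/2)^n" using i2 C' by (simp add: dist_norm norm_minus_commute field_simps)
  finally have dn: "norm d \<le> (1/2)^n" .
  have "P' (y + d) = x" unfolding P'_def linear_add[OF linear_uop] using d(2) P'_def by simp
  moreover have "y + d \<in> essential" using subspace_add[OF subspace_essential y d(1)] .
  moreover have "norm (s' - s) \<le> \<theta> * (1-\<theta>)^n * M"
    unfolding s'_def using bdd[of i] \<theta> by (simp add: mult_left_mono)
  ultimately show ?thesis using P' dn unfolding P'_def
    by (intro exI[of _ s'] exI[of _ "y + d"] exI[of _ C']) simp
qed

text \<open>Iterating the step from (s, y, C) = (0, x, 1) gives sequences s_n, y_n with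
  (1-\<theta>)^n y_n + s_n\<cdot>y_n = x whose increments decay geometrically.\<close>
lemma factorization_sequences:
  assumes x: "x \<in> essential"
  obtains s y where "\<And>n. uop ((1-\<theta>)^n) (s n) (y n) = x"
    "\<And>n. norm (s (Suc n) - s n) \<le> (\<theta> * M) * (1-\<theta>)^n" "\<And>n. norm (y (Suc n) - y n) \<le> 1 * (1/2)^n"
proof -
  define stage where "stage n t \<longleftrightarrow> fst (snd t) \<in> essential \<and> uop ((1-\<theta>)^n) (fst t) (fst (snd t)) = x
      \<and> invertible_on essential (uop ((1-\<theta>)^n) (fst t)) (snd (snd t))" for n and t :: "'a \<times> 'x \<times> real"
  have "\<exists>f. \<forall>n. stage n (f n) \<and> (norm (fst (f (Suc n)) - fst (f n)) \<le> \<theta> * (1-\<theta>)^n * M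
           \<and> norm (fst (snd (f (Suc n))) - fst (snd (f n))) \<le> (1/2)^n)"
  proof (rule dependent_nat_choice)
    have "uop 1 0 = (\<lambda>z. 1 *\<^sub>R z)" by (simp add: uop_def[abs_def] bounded_bilinear.zero_left[OF act])
    then have "stage 0 (0, x, 1)"
      unfolding stage_def using x invertible_on_scaleR[OF subspace_essential, of 1] by simp
    then show "\<exists>t. stage 0 t" ..
  next
    fix t n assume st: "stage n t"
    obtain s y C where t: "t = (s, y, C)" by (cases t)
    have "y \<in> essential" "uop ((1-\<theta>)^n) s y = x" "invertible_on essential (uop ((1-\<theta>)^n) s) C"
      using st unfolding stage_def t by simp_all
    then obtain s' y' C' where "y' \<in> essential" "uop ((1-\<theta>)^Suc n) s' y' = x"
      "invertible_on essential (uop ((1-\<theta>)^Suc n) s') C'"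
      "norm (s' - s) \<le> \<theta> * (1-\<theta>)^n * M" "norm (y' - y) \<le> (1/2)^n"
      using factorization_step by blast
    then show "\<exists>t'. stage (Suc n) t' \<and> (norm (fst t' - fst t) \<le> \<theta> * (1-\<theta>)^n * M
                 \<and> norm (fst (snd t') - fst (snd t)) \<le> (1/2)^n)"
      unfolding stage_def t by (intro exI[of _ "(s', y', C')"]) simp
  qed
  then obtain f where f: "\<And>n. stage n (f n)"
    and steps: "\<And>n. norm (fst (f (Suc n)) - fst (f n)) \<le> \<theta> * (1-\<theta>)^n * M"
      "\<And>n. norm (fst (snd (f (Suc n))) - fst (snd (f n))) \<le> (1/2)^n"
    by blast
  show ?thesis
  proof (rule that[of "\<lambda>n. fst (f n)" "\<lambda>n. fst (snd (f n))"])
    show "uop ((1-\<theta>)^n) (fst (f n)) (fst (snd (f n))) = x" for n using f[of n] unfolding stage_def by blast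
    show "norm (fst (f (Suc n)) - fst (f n)) \<le> (\<theta> * M) * (1-\<theta>)^n" for n
      using steps(1)[of n] by (simp add: mult_ac)
    show "norm (fst (snd (f (Suc n))) - fst (snd (f n))) \<le> 1 * (1/2)^n" for n
      using steps(2)[of n] by simp
  qed
qed

text \<open>Cohen--Hewitt factorization: every essential vector is a product a\<cdot>y, where a and y are
  the limits of the Cauchy sequences s_n and y_n.\<close>
theorem cohen_factorization:
  assumes x: "x \<in> essential"
  shows "\<exists>a y. x = act a y"
proof -
  obtain s y where eq: "\<And>n. uop ((1-\<theta>)^n) (s n) (y n) = x"
    and steps: "\<And>n. norm (s (Suc n) - s n) \<le> (\<theta> * M) * (1-\<theta>)^n" "\<And>n. norm (y (Suc n) - y n) \<le> 1 * (1/2)^n"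
    using factorization_sequences[OF x] by blast
  have "\<exists>a. s \<longlonglongrightarrow> a" using \<theta> by (intro convergent_geometric_increments[OF _ _ steps(1)]) simp_all
  moreover have "\<exists>b. y \<longlonglongrightarrow> b" by (rule convergent_geometric_increments[OF _ _ steps(2)]) simp_all
  ultimately obtain a b where a: "s \<longlonglongrightarrow> a" and b: "y \<longlonglongrightarrow> b" by blast
  have "(\<lambda>n. uop ((1-\<theta>)^n) (s n) (y n)) \<longlonglongrightarrow> 0 *\<^sub>R b + act a b"
    unfolding uop_def using \<theta>
    by (intro tendsto_add tendsto_scaleR LIMSEQ_power_zero b bounded_bilinear.tendsto[OF act a b]) simp
  then have "(\<lambda>n. x) \<longlonglongrightarrow> act a b" by (simp add: eq)
  then have "x = act a b" by (rule LIMSEQ_unique[OF tendsto_const])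
  then show ?thesis by blast
qed

end

section \<open>Topological centres and factorization of the dual module\<close>

locale approximate_identity_action =
  fixes m :: "'a::banach \<Rightarrow> 'b::banach \<Rightarrow> 'b" and mul :: "'a \<Rightarrow> 'a \<Rightarrow> 'a"
    and e :: "'i::preorder \<Rightarrow> 'a" and e'' :: "('a \<Rightarrow>\<^sub>L real) \<Rightarrow>\<^sub>L real" and M :: real
  assumes m: "bounded_bilinear m"
    and assoc: "\<And>a0 a b. m a0 (m a b) = m (mul a0 a) b"
    and dir: "directed TYPE('i)"
    and bdd: "\<And>i. norm (e i) \<le> M"
    and right_unit: "\<And>a. ((\<lambda>i. mul a (e i)) \<longlongrightarrow> a) net_filter"
    and left_unit: "\<And>b. ((\<lambda>i. m (e i) b) \<longlongrightarrow> b) net_filter"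
    and weak_star_limit: "\<And>a'. ((\<lambda>i. blinfun_apply a' (e i)) \<longlongrightarrow> blinfun_apply e'' a') net_filter"
begin

lemma net_filter_ne: "(net_filter :: 'i filter) \<noteq> bot"
  by (rule net_filter_nontrivial[OF dir])

lemma adj3_limit:
  "((\<lambda>i. blinfun_apply y'' (adj1 m z' (e i))) \<longlongrightarrow> blinfun_apply (adj3 m e'' y'') z') net_filter"
  using weak_star_limit[of "adj2 m y'' z'"] by (simp add: adj3_apply[OF m] adj2_apply[OF m])

text \<open>If the dual module is factorizable, B*A = B*, then e'' acts as the identity on B**,
  so e'' lies in the topological centre.\<close>
lemma continuous_if_factorizable:
  assumes fact: "\<And>z'. \<exists>c' a. z' = adj1 m c' a"
  shows "continuous_map wstar wstar (\<lambda>b''. adj3 m e'' b'')"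
proof -
  have unit: "((\<lambda>i. adj1 m z' (e i)) \<longlongrightarrow> z') net_filter" for z'
  proof -
    obtain c' a where z: "z' = adj1 m c' a" using fact by blast
    have "((\<lambda>i. adj1 m c' (mul a (e i))) \<longlongrightarrow> adj1 m c' a) net_filter"
      by (rule bounded_linear.tendsto[OF bounded_linear_adj1[OF m] right_unit])
    then show ?thesis unfolding z adj1_assoc[OF m assoc] .
  qed
  have "adj3 m e'' b'' = b''" for b''
  proof (rule blinfun_eqI)
    fix z'
    have "((\<lambda>i. blinfun_apply b'' (adj1 m z' (e i))) \<longlongrightarrow> blinfun_apply b'' z') net_filter"
      by (rule bounded_linear.tendsto[OF blinfun.bounded_linear_right unit])
    then show "blinfun_apply (adj3 m e'' b'') z' = blinfun_apply b'' z'"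
      using tendsto_unique[OF net_filter_ne adj3_limit] by blast
  qed
  then have "(\<lambda>b''. adj3 m e'' b'') = id" by auto
  then show ?thesis by simp
qed

text \<open>Conversely, weak*-continuity of b'' \<mapsto> e''\<cdot>b'' makes z'\<cdot>e_i converge weakly to z':
  the functional b'' \<mapsto> (e''\<cdot>b'')(z') is evaluation at some point of B*, which must be z'.\<close>
lemma weak_convergence_if_continuous:
  fixes f :: "('b \<Rightarrow>\<^sub>L real) \<Rightarrow>\<^sub>L real"
  assumes cont: "continuous_map wstar wstar (\<lambda>b''. adj3 m e'' b'')"
  shows "((\<lambda>i. blinfun_apply f (adj1 m z' (e i))) \<longlongrightarrow> blinfun_apply f z') net_filter"
proof -
  define \<Phi> where "\<Phi> b'' = blinfun_apply (adj3 m e'' b'') z'" for b''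
  have "continuous_map wstar euclideanreal \<Phi>"
    unfolding \<Phi>_def using continuous_map_compose[OF cont continuous_map_wstar_eval] by (simp add: o_def)
  moreover have "linear \<Phi>"
  proof (rule linearI)
    show "\<Phi> (u + v) = \<Phi> u + \<Phi> v" for u v
    proof -
      have "((\<lambda>i. blinfun_apply (u + v) (adj1 m z' (e i))) \<longlongrightarrow> \<Phi> u + \<Phi> v) net_filter"
        unfolding blinfun.add_left \<Phi>_def by (intro tendsto_add adj3_limit)
      then show ?thesis using tendsto_unique[OF net_filter_ne adj3_limit] unfolding \<Phi>_def by blast
    qed
    show "\<Phi> (r *\<^sub>R u) = r *\<^sub>R \<Phi> u" for r u
    proof -
      have "((\<lambda>i. blinfun_apply (r *\<^sub>R u) (adj1 m z' (e i))) \<longlongrightarrow> r * \<Phi> u) net_filter"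
        unfolding blinfun.scaleR_left \<Phi>_def real_scaleR_def by (intro tendsto_mult tendsto_const adj3_limit)
      then show ?thesis using tendsto_unique[OF net_filter_ne adj3_limit] unfolding \<Phi>_def by simp
    qed
  qed
  ultimately obtain c' where c': "\<And>b''. \<Phi> b'' = blinfun_apply b'' c'"
    using wstar_continuous_functional by blast
  have "c' = z'"
  proof (rule blinfun_eqI)
    fix b
    define \<beta> :: "('b \<Rightarrow>\<^sub>L real) \<Rightarrow>\<^sub>L real" where "\<beta> = Blinfun (\<lambda>x'. blinfun_apply x' b)"
    have \<beta>: "blinfun_apply \<beta> x' = blinfun_apply x' b" for x'
      unfolding \<beta>_def by (simp add: bounded_linear_Blinfun_apply[OF blinfun.bounded_linear_left])
    have "((\<lambda>i. blinfun_apply z' (m (e i) b)) \<longlongrightarrow> blinfun_apply z' b) net_filter"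
      by (rule bounded_linear.tendsto[OF blinfun.bounded_linear_right left_unit])
    then have "\<Phi> \<beta> = blinfun_apply z' b"
      using tendsto_unique[OF net_filter_ne adj3_limit[of \<beta> z']] unfolding \<Phi>_def \<beta> adj1_apply[OF m] by blast
    then show "blinfun_apply c' b = blinfun_apply z' b" using c'[of \<beta>] \<beta> by simp
  qed
  then show ?thesis using adj3_limit[of f z'] c'[of f] unfolding \<Phi>_def by simp
qed

text \<open>Weak*-continuity of b'' \<mapsto> e''\<cdot>b'' forces B*A = B*: every z' is weakly, hence (by
  Hahn--Banach) norm-approximated by z'\<cdot>e_i, so it is essential and Cohen's theorem factors it.\<close>
lemma factorizable_if_continuous:
  assumes cont: "continuous_map wstar wstar (\<lambda>b''. adj3 m e'' b'')"
  shows "\<exists>c' a. z' = adj1 m c' a"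
proof -
  interpret C: approximate_unit_action "\<lambda>a x. adj1 m x a" "\<lambda>a c. mul c a" e net_filter M
    by (rule approximate_unit_action.intro[OF bounded_bilinear_adj1[OF m] _ bdd net_filter_ne right_unit])
       (rule adj1_assoc[OF m assoc, symmetric])
  have "z' \<in> C.essential"
  proof (rule ccontr)
    assume "z' \<notin> C.essential"
    then obtain f :: "('b \<Rightarrow>\<^sub>L real) \<Rightarrow>\<^sub>L real" where f: "\<forall>z\<in>C.essential. f z = 0" "f z' = 1"
      using separating_functional[OF C.closed_essential C.subspace_essential] by blast
    have "blinfun_apply f (adj1 m z' (e i)) = 0" for i using f(1) C.act_essential by blast
    then have "((\<lambda>i::'i. 0::real) \<longlongrightarrow> 1) net_filter"
      using weak_convergence_if_continuous[OF cont, of f z'] f(2) by simp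
    then show False using tendsto_unique[OF net_filter_ne tendsto_const] by fastforce
  qed
  then show ?thesis using C.cohen_factorization by blast
qed

end

text \<open>If the first action has a factorizable dual module and the second does not, the
  topological centres of the two actions differ: e'' lies in the first but not in the second.\<close>
lemma topological_centres_differ:
  assumes N1: "approximate_identity_action m1 mul1 e e'' M"
    and N2: "approximate_identity_action m2 mul2 e e'' M"
    and fact1: "\<And>z'. \<exists>c' a. z' = adj1 m1 c' a"
    and not_fact2: "\<not> (\<forall>z'. \<exists>c' a. z' = adj1 m2 c' a)"
  shows "{a''. continuous_map wstar wstar (\<lambda>b''. adj3 m1 a'' b'')}
       \<noteq> {a''. continuous_map wstar wstar (\<lambda>b''. adj3 m2 a'' b'')}"
proof
  assume eq: "{a''. continuous_map wstar wstar (\<lambda>b''. adj3 m1 a'' b'')}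
            = {a''. continuous_map wstar wstar (\<lambda>b''. adj3 m2 a'' b'')}"
  have "continuous_map wstar wstar (\<lambda>b''. adj3 m1 e'' b'')"
    by (rule approximate_identity_action.continuous_if_factorizable[OF N1 fact1])
  then have "continuous_map wstar wstar (\<lambda>b''. adj3 m2 e'' b'')" using eq by blast
  then have "\<forall>z'. \<exists>c' a. z' = adj1 m2 c' a"
    using approximate_identity_action.factorizable_if_continuous[OF N2] by blast
  then show False using not_fact2 by blast
qed

lemma dual_mod_right_UNIV_iff: "dual_mod_right la = UNIV \<longleftrightarrow> (\<forall>z'. \<exists>c' a. z' = adj1 la c' a)"
proof -
  have "dual_mod_right la = {adj1 la c' a | c' a. True}" unfolding dual_mod_right_def adj1_def by simp
  then show ?thesis by blast
qed

lemma dual_mod_left_UNIV_iff: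
  "dual_mod_left ra = UNIV \<longleftrightarrow> (\<forall>z'. \<exists>c' a. z' = adj1 (\<lambda>a b. ra b a) c' a)"
proof -
  have "dual_mod_left ra = {adj1 (\<lambda>a b. ra b a) c' a | c' a. True}" unfolding dual_mod_left_def adj1_def by simp
  then show ?thesis by blast
qed

text \<open>Both la and the flipped right action satisfy the hypotheses of the previous section, so
  the two cases of the theorem are instances of the lemma on differing topological centres.\<close>
theorem mainTheorem2:
  fixes la :: "'a::{real_normed_algebra,banach} \<Rightarrow> 'b::banach \<Rightarrow> 'b"
    and ra :: "'b \<Rightarrow> 'a \<Rightarrow> 'b"
    and e :: "'i::preorder \<Rightarrow> 'a"
    and e'' :: "('a \<Rightarrow>\<^sub>L real) \<Rightarrow>\<^sub>L real"
  assumes bimod: "banach_bimodule la ra"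
    and dir: "directed TYPE('i)"
    and bdd: "\<exists>M. \<forall>i. norm (e i) \<le> M"
    and apA: "\<forall>a. ((\<lambda>i. e i * a) \<longlongrightarrow> a) net_filter \<and> ((\<lambda>i. a * e i) \<longlongrightarrow> a) net_filter"
    and apB: "\<forall>b. ((\<lambda>i. la (e i) b) \<longlongrightarrow> b) net_filter \<and> ((\<lambda>i. ra b (e i)) \<longlongrightarrow> b) net_filter"
    and wlim: "\<forall>a'. ((\<lambda>i. blinfun_apply a' (e i)) \<longlongrightarrow> blinfun_apply e'' a') net_filter"
  shows "(Zt_elem la e'' = UNIV \<and> dual_mod_right la = UNIV \<and> dual_mod_left ra \<noteq> UNIV
            \<longrightarrow> Zcenter la \<noteq> Zcenter_t ra)
       \<and> (Z_elem ra e'' = UNIV \<and> dual_mod_left ra = UNIV \<and> dual_mod_right la \<noteq> UNIV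
            \<longrightarrow> Zcenter la \<noteq> Zcenter_t ra)"
proof -
  obtain M where M: "\<And>i. norm (e i) \<le> M" using bdd by blast
  have la: "bounded_bilinear la" and ra: "bounded_bilinear ra"
    and la_assoc: "\<And>a c b. la (a * c) b = la a (la c b)" and ra_assoc: "\<And>b a c. ra b (a * c) = ra (ra b a) c"
    using bimod unfolding banach_bimodule_def by blast+
  have N1: "approximate_identity_action la (\<lambda>a0 a. a0 * a) e e'' M"
    by (rule approximate_identity_action.intro[OF la _ dir M]) (use la_assoc apA apB wlim in auto)
  have N2: "approximate_identity_action (\<lambda>a b. ra b a) (\<lambda>a0 a. a * a0) e e'' M"
    by (rule approximate_identity_action.intro[OF bounded_bilinear.flip[OF ra] _ dir M])
      (use ra_assoc apA apB wlim in auto)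
  show ?thesis
    unfolding Zcenter_def Zcenter_t_def dual_mod_right_UNIV_iff dual_mod_left_UNIV_iff
    using topological_centres_differ[OF N1 N2] topological_centres_differ[OF N2 N1] by metis
qed

end
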